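(* (i) For every $n\ge1$, $\gamma(n)=2^{n-1}$. (ii) If $2\le m\le\infty$ and $n\ge1$, then $c_{\pi s,s+}(n,\ell_1^m)=2^{n-1}$.
   Context: All vector spaces are real. An ordered normed space is a real normed space $E$ together with a closed convex cone $E_+\subseteq E$ (positive elements) such that $E=E_+-E_+$ and such that, writing $\|x\|_+:=\inf\{\|y\|+\|z\|: x=y-z,\ y,z\in E_+\}$, the constant $c_+(E):=\sup\{\|x\|_+:\|x\|\le1\}$ is finite; $E^+$ denotes $E$ with the norm $\|\cdot\|_+$. $E^{\vee n}$ is the space of symmetric tensors in the algebraic tensor power $E^{\otimes n}$, and $x^{\otimes n}:=x\otimes\cdots\otimes x$. For a normed space $F$, $\|\mathbf{x}\|_{\pi s,F}:=\inf\{\sum_k|a_k|\,\|x_k\|^n : \mathbf{x}=\sum_k a_k x_k^{\otimes n},\ x_k\in F\}$, and for an ordered normed space $E$, $\|\mathbf{x}\|_{\pi s+,E}:=\inf\{\sum_k|a_k|\,\|x_k\|^n : \mathbf{x}=\sum_k a_k x_k^{\otimes n},\ x_k\in E_+\}$ (finite sums, $a_k\in\mathbb{R}$). $c_{\pi s,s+}(n,E):=\sup\{\|\mathbf{x}\|_{\pi s+,E}/\|\mathbf{x}\|_{\pi s,E}:0\ne\mathbf{x}\in E^{\vee n}\}$. $\gamma(n)$ is the smallest constant $C$ such that $\|\mathbf{x}\|_{\pi s+,E}\le C\,\|\mathbf{x}\|_{\pi s,E^+}$ for every ordered normed space $E$ and every $\mathbf{x}\in E^{\vee n}$. $\ell_1^m$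 ($1\le m<\infty$) is $\mathbb{R}^m$ with the $\ell_1$-norm, $\ell_1^\infty=\ell_1$, ordered coordinatewise. *)

theory Defs
  imports Complex_Main "HOL-Library.Function_Algebras" "HOL-Library.Extended_Nat" "HOL-Library.Extended_Real"
begin

instantiation "fun" :: (type, real_vector) real_vector
begin
definition scaleR_fun :: "real \<Rightarrow> ('a \<Rightarrow> 'b) \<Rightarrow> 'a \<Rightarrow> 'b" where
  "scaleR_fun r f = (\<lambda>x. r *\<^sub>R f x)"
instance
  by standard (auto simp: scaleR_fun_def fun_eq_iff scaleR_add_right scaleR_add_left)
end

definition is_norm_on :: "'a::real_vector set \<Rightarrow> ('a \<Rightarrow> real) \<Rightarrow> bool" where
  "is_norm_on V N \<longleftrightarrow>
     (\<forall>x\<in>V. 0 \<le> N x \<and> (N x = 0 \<longleftrightarrow> x = 0)) \<and>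
     (\<forall>c. \<forall>x\<in>V. N (c *\<^sub>R x) = \<bar>c\<bar> * N x) \<and>
     (\<forall>x\<in>V. \<forall>y\<in>V. N (x + y) \<le> N x + N y)"

definition is_subspace :: "'a::real_vector set \<Rightarrow> bool" where
  "is_subspace V \<longleftrightarrow> 0 \<in> V \<and> (\<forall>x\<in>V. \<forall>y\<in>V. x + y \<in> V) \<and> (\<forall>c. \<forall>x\<in>V. c *\<^sub>R x \<in> V)"

definition closed_convex_cone :: "'a::real_vector set \<Rightarrow> ('a \<Rightarrow> real) \<Rightarrow> 'a set \<Rightarrow> bool" where
  "closed_convex_cone V N K \<longleftrightarrow>
     K \<subseteq> V \<and> K \<noteq> {} \<and>
     (\<forall>x\<in>K. \<forall>y\<in>K. x + y \<in> K) \<and>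
     (\<forall>c\<ge>0. \<forall>x\<in>K. c *\<^sub>R x \<in> K) \<and>
     (\<forall>s x. (\<forall>k. s k \<in> K) \<longrightarrow> x \<in> V \<longrightarrow> (\<lambda>k. N (s k - x)) \<longlonglongrightarrow> 0 \<longrightarrow> x \<in> K)"

definition plus_norm :: "('a::real_vector \<Rightarrow> real) \<Rightarrow> 'a set \<Rightarrow> 'a \<Rightarrow> real" where
  "plus_norm N K x = Inf {N y + N z | y z. y \<in> K \<and> z \<in> K \<and> x = y - z}"

definition ordered_normed_space :: "'a::real_vector set \<Rightarrow> ('a \<Rightarrow> real) \<Rightarrow> 'a set \<Rightarrow> bool" where
  "ordered_normed_space V N K \<longleftrightarrow>
     is_subspace V \<and> is_norm_on V N \<and> closed_convex_cone V N K \<and>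
     (\<forall>x\<in>V. \<exists>y\<in>K. \<exists>z\<in>K. x = y - z) \<and>
     (\<exists>C. \<forall>x\<in>V. N x \<le> 1 \<longrightarrow> plus_norm N K x \<le> C)"

text \<open>Symmetric tensors: a finite list [(a_k, x_k)] represents sum_k a_k x_k^{(tensor n)}.
Two lists represent the same symmetric tensor iff the associated homogeneous
polynomials f \<mapsto> sum_k a_k (f x_k)^n agree on all (algebraic) linear functionals f on V.\<close>

definition lin_functional_on :: "'a::real_vector set \<Rightarrow> ('a \<Rightarrow> real) \<Rightarrow> bool" where
  "lin_functional_on V f \<longleftrightarrow>
     (\<forall>x\<in>V. \<forall>y\<in>V. f (x + y) = f x + f y) \<and> (\<forall>c. \<forall>x\<in>V. f (c *\<^sub>R x) = c * f x)"

definition tensor_poly :: "nat \<Rightarrow> ('a \<Rightarrow> real) \<Rightarrow> (real \<times> 'a) list \<Rightarrow> real" where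
  "tensor_poly n f xs = (\<Sum>(a, x)\<leftarrow>xs. a * (f x) ^ n)"

definition sym_tensor_eq :: "'a::real_vector set \<Rightarrow> nat \<Rightarrow> (real \<times> 'a) list \<Rightarrow> (real \<times> 'a) list \<Rightarrow> bool" where
  "sym_tensor_eq V n xs ys \<longleftrightarrow>
     (\<forall>f. lin_functional_on V f \<longrightarrow> tensor_poly n f xs = tensor_poly n f ys)"

definition sym_tensors :: "'a set \<Rightarrow> (real \<times> 'a) list set" where
  "sym_tensors V = {xs. set (map snd xs) \<subseteq> V}"

definition rep_cost :: "('a \<Rightarrow> real) \<Rightarrow> nat \<Rightarrow> (real \<times> 'a) list \<Rightarrow> real" where
  "rep_cost N n ys = (\<Sum>(a, y)\<leftarrow>ys. \<bar>a\<bar> * (N y) ^ n)"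

definition pi_s_norm :: "'a::real_vector set \<Rightarrow> ('a \<Rightarrow> real) \<Rightarrow> nat \<Rightarrow> (real \<times> 'a) list \<Rightarrow> real" where
  "pi_s_norm V N n xs = Inf {rep_cost N n ys | ys. set (map snd ys) \<subseteq> V \<and> sym_tensor_eq V n ys xs}"

definition pi_s_plus_norm :: "'a::real_vector set \<Rightarrow> ('a \<Rightarrow> real) \<Rightarrow> 'a set \<Rightarrow> nat \<Rightarrow> (real \<times> 'a) list \<Rightarrow> real" where
  "pi_s_plus_norm V N K n xs = Inf {rep_cost N n ys | ys. set (map snd ys) \<subseteq> K \<and> sym_tensor_eq V n ys xs}"

definition c_pis_splus :: "nat \<Rightarrow> 'a::real_vector set \<Rightarrow> ('a \<Rightarrow> real) \<Rightarrow> 'a set \<Rightarrow> ereal" where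
  "c_pis_splus n V N K =
     (SUP xs \<in> {xs \<in> sym_tensors V. \<not> sym_tensor_eq V n xs []}.
        ereal (pi_s_plus_norm V N K n xs / pi_s_norm V N n xs))"

text \<open>l_1^m (m finite, coordinates 0..m-1) and l_1 = l_1^\<infinity>, as subspaces of nat \<Rightarrow> real.\<close>
definition l1_space :: "enat \<Rightarrow> (nat \<Rightarrow> real) set" where
  "l1_space m = {x. summable (\<lambda>i. \<bar>x i\<bar>) \<and> (\<forall>i. m \<le> enat i \<longrightarrow> x i = 0)}"

definition l1_norm :: "(nat \<Rightarrow> real) \<Rightarrow> real" where
  "l1_norm x = (\<Sum>i. \<bar>x i\<bar>)"

definition l1_cone :: "enat \<Rightarrow> (nat \<Rightarrow> real) set" where
  "l1_cone m = {x \<in> l1_space m. \<forall>i. 0 \<le> x i}"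

end

theory Submission
  imports Defs "HOL-Computational_Algebra.Polynomial"
begin

text \<open>
  By continuity of the norms it suffices to represent a single power
  \<open>(y - z)\<^sup>\<otimes>\<^sup>n\<close>, \<open>y, z \<ge> 0\<close>, by powers \<open>(a y + b z)\<^sup>\<otimes>\<^sup>n\<close> with \<open>a, b \<ge> 0\<close> at cost about
  \<open>2\<^sup>n\<^sup>-\<^sup>1 (\<parallel>y\<parallel> + \<parallel>z\<parallel>)\<^sup>n\<close>. With \<open>A \<approx> \<parallel>y\<parallel>\<close>, \<open>B \<approx> \<parallel>z\<parallel>\<close>, \<open>c = (A - B)/(A + B)\<close> this is Lagrange
  interpolation of \<open>x \<mapsto> (m + d x)\<^sup>n\<close> at the extremal points \<open>cos (k\<pi>/n)\<close> of the Chebyshev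
  polynomial \<open>T\<^sub>n\<close>, evaluated at \<open>1/c > 1\<close>. There the Lagrange basis alternates in sign, so the
  total weight is \<open>c\<^sup>n T\<^sub>n(1/c) \<le> 2\<^sup>n\<^sup>-\<^sup>1\<close>.

  In \<open>\<ell>\<^sub>1\<^sup>2\<close> the tensor \<open>(e\<^sub>0 - e\<^sub>1)\<^sup>\<otimes>\<^sup>n\<close> has projective norm \<open>2\<^sup>n\<close>. Testing a
  positive representation against all functionals \<open>r + t s\<close> (\<open>r = w\<^sub>0 - w\<^sub>1\<close>, \<open>s = w\<^sub>0 + w\<^sub>1\<close>)
  shows that the mixed moments of \<open>r, s\<close> vanish, so the representation also reproduces the
  homogenised Chebyshev form \<open>s\<^sup>n T\<^sub>n(r/s)\<close>. This form has value \<open>2\<^sup>n\<^sup>-\<^sup>1 2\<^sup>n\<close> on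
  \<open>(e\<^sub>0 - e\<^sub>1)\<^sup>\<otimes>\<^sup>n\<close> but is bounded by \<open>\<parallel>w\<parallel>\<^sup>n\<close> on the positive cone.
\<close>

definition lagrange_basis :: "(nat \<Rightarrow> real) \<Rightarrow> nat \<Rightarrow> nat \<Rightarrow> real poly" where
  "lagrange_basis t n k =
     smult (1 / (\<Prod>i\<in>{..n}-{k}. t k - t i)) (\<Prod>i\<in>{..n}-{k}. [:- t i, 1:])"

lemma poly_lagrange_basis:
  "poly (lagrange_basis t n k) x = (\<Prod>i\<in>{..n}-{k}. (x - t i) / (t k - t i))"
  by (simp add: lagrange_basis_def poly_prod prod_dividef)

lemma degree_lagrange_basis:
  assumes "k \<le> n"
  shows "degree (lagrange_basis t n k) \<le> n"
proof -
  have "degree (\<Prod>i\<in>{..n}-{k}. [:- t i, 1:]) \<le> sum (degree \<circ> (\<lambda>i. [:- t i, 1::real:])) ({..n}-{k})"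
    by (rule degree_prod_sum_le) auto
  also have "\<dots> \<le> n" using assms by (simp add: card_Diff_singleton)
  finally show ?thesis
    unfolding lagrange_basis_def using degree_smult_le order_trans by blast
qed

lemma poly_lagrange_basis_node:
  assumes "inj_on t {..n}" "j \<le> n" "k \<le> n"
  shows "poly (lagrange_basis t n k) (t j) = (if j = k then 1 else 0)"
proof (cases "j = k")
  case True
  have "(\<Prod>i\<in>{..n}-{k}. (t k - t i) / (t k - t i)) = 1"
    by (rule prod.neutral) (use assms in \<open>auto simp: inj_on_def\<close>)
  then show ?thesis using True by (simp add: poly_lagrange_basis)
next
  case False
  have "(\<Prod>i\<in>{..n}-{k}. (t j - t i) / (t k - t i)) = 0"
    by (rule prod_zero) (use assms False in auto)
  then show ?thesis using False by (simp add: poly_lagrange_basis)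
qed

lemma lagrange_interpolation:
  assumes inj: "inj_on t {..n}" and deg: "degree h \<le> n"
  shows "poly h x = (\<Sum>k\<le>n. poly h (t k) * poly (lagrange_basis t n k) x)"
proof -
  define R where "R = h - (\<Sum>k\<le>n. smult (poly h (t k)) (lagrange_basis t n k))"
  have deg_R: "degree R \<le> n"
    unfolding R_def
    by (intro degree_diff_le deg degree_sum_le)
       (auto intro: order_trans[OF degree_smult_le] degree_lagrange_basis)
  have roots: "poly R (t j) = 0" if j: "j \<le> n" for j
  proof -
    have "(\<Sum>k\<le>n. poly h (t k) * poly (lagrange_basis t n k) (t j))
          = (\<Sum>k\<le>n. if k = j then poly h (t j) else 0)"
      by (rule sum.cong) (use j poly_lagrange_basis_node[OF inj] in auto)
    then show ?thesis using j by (simp add: R_def poly_sum)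
  qed
  have "R = 0"
  proof (rule ccontr)
    assume "R \<noteq> 0"
    then have "finite {x. poly R x = 0}" "card {x. poly R x = 0} \<le> degree R"
      by (simp_all add: poly_roots_finite card_poly_roots_bound)
    moreover have "t ` {..n} \<subseteq> {x. poly R x = 0}" using roots by auto
    ultimately have "card (t ` {..n}) \<le> n" using deg_R card_mono by (metis order_trans)
    moreover have "card (t ` {..n}) = Suc n" using inj by (simp add: card_image)
    ultimately show False by simp
  qed
  then have "poly h x = poly (\<Sum>k\<le>n. smult (poly h (t k)) (lagrange_basis t n k)) x"
    unfolding R_def by simp
  then show ?thesis by (simp add: poly_sum)
qed

fun chebyshev :: "nat \<Rightarrow> real poly" where
  "chebyshev 0 = 1"
| "chebyshev (Suc 0) = [:0, 1:]"
| "chebyshev (Suc (Suc n)) = [:0, 2:] * chebyshev (Suc n) - chebyshev n"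

lemma poly_chebyshev_cos: "poly (chebyshev n) (cos \<theta>) = cos (real n * \<theta>)"
proof (induction n rule: chebyshev.induct)
  case (3 n)
  have "real (Suc (Suc n)) * \<theta> = real (Suc n) * \<theta> + \<theta>" "real n * \<theta> = real (Suc n) * \<theta> - \<theta>"
    by (simp_all add: algebra_simps)
  then have "cos (real (Suc (Suc n)) * \<theta>) = 2 * cos \<theta> * cos (real (Suc n) * \<theta>) - cos (real n * \<theta>)"
    by (simp only: cos_add cos_diff) (simp add: algebra_simps)
  with 3 show ?case by simp
qed simp_all

lemma abs_poly_chebyshev_le_1:
  assumes "\<bar>u\<bar> \<le> 1"
  shows "\<bar>poly (chebyshev n) u\<bar> \<le> 1"
  using poly_chebyshev_cos[of n "arccos u"] assms by (simp add: cos_arccos_abs)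

lemma degree_chebyshev: "degree (chebyshev n) \<le> n"
proof (induction n rule: chebyshev.induct)
  case (3 n)
  have "degree ([:0, 2:] * chebyshev (Suc n)) \<le> Suc (Suc n)"
    using degree_mult_le[of "[:0, 2::real:]" "chebyshev (Suc n)"] 3 by simp
  with 3 show ?case by (simp add: degree_diff_le)
qed simp_all

lemma coeff_chebyshev_degree:
  "coeff (chebyshev n) n = (if n = 0 then 1 else 2 ^ (n - 1))"
proof (induction n rule: chebyshev.induct)
  case (3 n)
  have "coeff (chebyshev n) (Suc (Suc n)) = 0"
    using degree_chebyshev[of n] by (intro coeff_eq_0) simp
  with 3 show ?case by (simp add: mult_pCons_left)
qed simp_all

lemma chebyshev_reciprocal:
  assumes "c \<noteq> 0" "c\<^sup>2 \<le> 1"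
  shows "c ^ n * poly (chebyshev n) (1 / c)
         = ((1 + sqrt (1 - c\<^sup>2)) ^ n + (1 - sqrt (1 - c\<^sup>2)) ^ n) / 2"
proof (induction n rule: chebyshev.induct)
  case (3 n)
  define s where "s = sqrt (1 - c\<^sup>2)"
  have s2: "s\<^sup>2 = 1 - c\<^sup>2" unfolding s_def using assms by simp
  \<comment> \<open>\<open>1 \<pm> s\<close> are the roots of \<open>X\<^sup>2 - 2X + c\<^sup>2\<close>, the characteristic polynomial
    of the recursion.\<close>
  have root: "r ^ Suc (Suc n) = 2 * r ^ Suc n - c\<^sup>2 * r ^ n" if "r\<^sup>2 = 2 * r - c\<^sup>2" for r :: real
  proof -
    have "r ^ Suc (Suc n) = r\<^sup>2 * r ^ n" by (simp add: power2_eq_square)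
    also have "\<dots> = (2 * r - c\<^sup>2) * r ^ n" using that by simp
    finally show ?thesis by (simp add: algebra_simps)
  qed
  have "c ^ Suc (Suc n) * poly (chebyshev (Suc (Suc n))) (1 / c)
        = 2 * (c ^ Suc n * poly (chebyshev (Suc n)) (1 / c)) - c\<^sup>2 * (c ^ n * poly (chebyshev n) (1 / c))"
    using assms by (simp add: algebra_simps power2_eq_square)
  also have "\<dots> = ((1 + s) ^ Suc (Suc n) + (1 - s) ^ Suc (Suc n)) / 2"
    using root[of "1 + s"] root[of "1 - s"] s2
    unfolding 3 s_def[symmetric] by (simp add: power2_eq_square field_simps)
  finally show ?case unfolding s_def .
qed (use assms in simp_all)

lemma power_add_power_diff_le:
  fixes s :: real
  assumes "0 \<le> s" "s \<le> 1" "n \<ge> 1"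
  shows "(1 + s) ^ n + (1 - s) ^ n \<le> 2 ^ n"
  using \<open>n \<ge> 1\<close>
proof (induction n rule: dec_induct)
  case (step n)
  have "(1 + s) ^ Suc n + (1 - s) ^ Suc n \<le> 2 * ((1 + s) ^ n + (1 - s) ^ n)"
  proof -
    have "(1 + s) ^ n * (s - 1) \<le> 0" "0 \<le> (1 - s) ^ n * (1 + s)"
      using assms by (simp_all add: mult_nonneg_nonpos)
    then show ?thesis by (simp add: algebra_simps)
  qed
  with step show ?case by simp
qed simp

lemma chebyshev_reciprocal_le:
  assumes "0 < c" "c < 1" "n \<ge> 1"
  shows "c ^ n * poly (chebyshev n) (1 / c) \<le> 2 ^ (n - 1)"
proof -
  have c2: "c\<^sup>2 \<le> 1" using assms by (simp add: power_le_one)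
  have "2 * (c ^ n * poly (chebyshev n) (1 / c)) \<le> 2 ^ n"
    using chebyshev_reciprocal[OF _ c2, of n] power_add_power_diff_le[of "sqrt (1 - c\<^sup>2)" n] c2 assms
    by simp
  also have "(2::real) ^ n = 2 * 2 ^ (n - 1)" using assms(3) by (cases n) auto
  finally show ?thesis by simp
qed

definition chebyshev_node :: "nat \<Rightarrow> nat \<Rightarrow> real" where
  "chebyshev_node n k = cos (real k * pi / real n)"

lemma chebyshev_node_strict_antimono:
  assumes "n \<ge> 1" "i < j" "j \<le> n"
  shows "chebyshev_node n j < chebyshev_node n i"
  unfolding chebyshev_node_def
proof (rule cos_monotone_0_pi)
  show "0 \<le> real i * pi / real n" using assms by simp
  show "real i * pi / real n < real j * pi / real n"
    using assms by (intro divide_strict_right_mono mult_strict_right_mono) auto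
  show "real j * pi / real n \<le> pi" using assms by (simp add: field_simps)
qed

lemma inj_on_chebyshev_node: "n \<ge> 1 \<Longrightarrow> inj_on (chebyshev_node n) {..n}"
  unfolding inj_on_def by (metis atMost_iff chebyshev_node_strict_antimono less_irrefl linorder_neqE_nat)

lemma abs_chebyshev_node_le_1: "\<bar>chebyshev_node n k\<bar> \<le> 1"
  by (simp add: chebyshev_node_def)

lemma poly_chebyshev_node: "n \<ge> 1 \<Longrightarrow> poly (chebyshev n) (chebyshev_node n k) = (-1) ^ k"
  unfolding chebyshev_node_def poly_chebyshev_cos by simp

lemma sign_lagrange_basis_chebyshev_node:
  assumes n: "n \<ge> 1" and k: "k \<le> n" and x: "x > 1"
  shows "0 < (-1) ^ k * poly (lagrange_basis (chebyshev_node n) n k) x"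
proof -
  define t where "t = chebyshev_node n"
  define f where "f i = (x - t i) / (t k - t i)" for i
  have t_less_x: "t i < x" for i using abs_chebyshev_node_le_1[of n i] x by (simp add: t_def)
  have split: "{..n} - {k} = {..<k} \<union> {k<..n}" using k by auto
  have "poly (lagrange_basis t n k) x = (\<Prod>i<k. f i) * (\<Prod>i\<in>{k<..n}. f i)"
    unfolding poly_lagrange_basis split f_def by (subst prod.union_disjoint) auto
  moreover have "(-1) ^ k * (\<Prod>i<k. f i) = (\<Prod>i<k. - f i)" by (simp add: prod_uminus)
  moreover have "0 < (\<Prod>i<k. - f i)"
  proof (rule prod_pos)
    fix i assume "i \<in> {..<k}"
    then have "t k < t i" using chebyshev_node_strict_antimono[OF n _ k] by (simp add: t_def)
    with t_less_x[of i] show "0 < - f i" by (simp add: f_def divide_pos_neg)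
  qed
  moreover have "0 < (\<Prod>i\<in>{k<..n}. f i)"
  proof (rule prod_pos)
    fix i assume "i \<in> {k<..n}"
    then have "t i < t k" using chebyshev_node_strict_antimono[OF n] by (simp add: t_def)
    with t_less_x[of i] show "0 < f i" by (simp add: f_def)
  qed
  ultimately show ?thesis by (simp add: t_def mult.assoc[symmetric])
qed

lemma sum_abs_lagrange_basis_chebyshev_node:
  assumes n: "n \<ge> 1" and x: "x > 1"
  shows "(\<Sum>k\<le>n. \<bar>poly (lagrange_basis (chebyshev_node n) n k) x\<bar>) = poly (chebyshev n) x"
proof -
  have "poly (chebyshev n) x
        = (\<Sum>k\<le>n. poly (chebyshev n) (chebyshev_node n k) * poly (lagrange_basis (chebyshev_node n) n k) x)"
    by (rule lagrange_interpolation[OF inj_on_chebyshev_node[OF n] degree_chebyshev])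
  also have "\<dots> = (\<Sum>k\<le>n. \<bar>poly (lagrange_basis (chebyshev_node n) n k) x\<bar>)"
  proof (rule sum.cong)
    fix k assume "k \<in> {..n}"
    then have "0 < (-1) ^ k * poly (lagrange_basis (chebyshev_node n) n k) x"
      using sign_lagrange_basis_chebyshev_node[OF n _ x] by simp
    then show "poly (chebyshev n) (chebyshev_node n k) * poly (lagrange_basis (chebyshev_node n) n k) x
               = \<bar>poly (lagrange_basis (chebyshev_node n) n k) x\<bar>"
      using poly_chebyshev_node[OF n] by (cases "even k") (auto simp: abs_if)
  qed simp
  finally show ?thesis by simp
qed

lemma diff_power_positive_expansion_gt:
  fixes A B :: real
  assumes n: "n \<ge> 1" and B: "0 < B" and AB: "B < A"
  shows "\<exists>w a b. (\<forall>k\<le>n. 0 \<le> a k \<and> 0 \<le> b k) \<and>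
           (\<forall>p q. (p - q) ^ n = (\<Sum>k\<le>n. w k * (a k * p + b k * q) ^ n)) \<and>
           (\<Sum>k\<le>n. \<bar>w k\<bar> * (a k * A + b k * B) ^ n) \<le> 2 ^ (n - 1) * (A + B) ^ n"
proof -
  define S where "S = A + B"
  define c where "c = (A - B) / S"
  define t where "t = chebyshev_node n"
  define w where "w k = c ^ n * poly (lagrange_basis t n k) (1 / c)" for k
  define a where "a k = S * (1 + t k) / (2 * A)" for k
  define b where "b k = S * (1 - t k) / (2 * B)" for k
  have A: "0 < A" and S: "0 < S" using B AB by (simp_all add: S_def)
  have c: "0 < c" "c < 1" using AB B S by (simp_all add: c_def S_def field_simps)
  have "0 \<le> a k \<and> 0 \<le> b k" for k
    using abs_chebyshev_node_le_1[of n k] A B S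
    by (auto simp: a_def b_def t_def abs_le_iff intro!: divide_nonneg_pos)
  moreover have "(p - q) ^ n = (\<Sum>k\<le>n. w k * (a k * p + b k * q) ^ n)" for p q
  proof -
    define m where "m = (p / A + q / B) / 2"
    define d where "d = (p / A - q / B) / 2"
    have "degree ([:m, d:] ^ n) \<le> n"
      using degree_power_le[of "[:m, d:]" n] by (simp add: le_trans)
    from lagrange_interpolation[OF inj_on_chebyshev_node[OF n] this, of "1 / c"]
    have "(m + d / c) ^ n = (\<Sum>k\<le>n. (m + d * t k) ^ n * poly (lagrange_basis t n k) (1 / c))"
      by (simp add: t_def algebra_simps)
    moreover have "p - q = S * c * (m + d / c)"
    proof -
      have "S * c = A - B" using S by (simp add: c_def)
      moreover have "S * c * (m + d / c) = S * c * m + S * d"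
        using c by (simp add: field_simps)
      ultimately have "S * c * (m + d / c) = (A - B) * m + (A + B) * d"
        by (simp add: S_def)
      also have "\<dots> = p - q" using A B by (simp add: m_def d_def field_simps)
      finally show ?thesis by simp
    qed
    moreover have "a k * p + b k * q = S * (m + d * t k)" for k
      using A B by (simp add: S_def m_def d_def a_def b_def field_simps)
    ultimately show ?thesis
      by (simp add: w_def power_mult_distrib sum_distrib_left mult_ac)
  qed
  moreover have "(\<Sum>k\<le>n. \<bar>w k\<bar> * (a k * A + b k * B) ^ n) \<le> 2 ^ (n - 1) * (A + B) ^ n"
  proof -
    have "a k * A + b k * B = S" for k
      using A B by (simp add: a_def b_def field_simps)
    then have "(\<Sum>k\<le>n. \<bar>w k\<bar> * (a k * A + b k * B) ^ n)
               = S ^ n * (c ^ n * (\<Sum>k\<le>n. \<bar>poly (lagrange_basis t n k) (1 / c)\<bar>))"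
      using c by (simp add: w_def abs_mult sum_distrib_left mult.commute mult.left_commute)
    also have "\<dots> = S ^ n * (c ^ n * poly (chebyshev n) (1 / c))"
      using c by (simp add: t_def sum_abs_lagrange_basis_chebyshev_node[OF n])
    also have "\<dots> \<le> S ^ n * 2 ^ (n - 1)"
      using chebyshev_reciprocal_le[OF c n] S by (intro mult_left_mono) auto
    finally show ?thesis by (simp add: S_def mult.commute)
  qed
  ultimately show ?thesis by blast
qed

lemma diff_power_positive_expansion:
  fixes A B :: real
  assumes n: "n \<ge> 1" and "0 < A" "0 < B" "A \<noteq> B"
  shows "\<exists>w a b. (\<forall>k\<le>n. 0 \<le> a k \<and> 0 \<le> b k) \<and>
           (\<forall>p q. (p - q) ^ n = (\<Sum>k\<le>n. w k * (a k * p + b k * q) ^ n)) \<and>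
           (\<Sum>k\<le>n. \<bar>w k\<bar> * (a k * A + b k * B) ^ n) \<le> 2 ^ (n - 1) * (A + B) ^ n"
proof (cases "B < A")
  case True
  then show ?thesis using diff_power_positive_expansion_gt[OF n \<open>0 < B\<close>] by blast
next
  case False
  then have "A < B" using \<open>A \<noteq> B\<close> by simp
  from diff_power_positive_expansion_gt[OF n \<open>0 < A\<close> this] obtain w a b where
    ab: "\<forall>k\<le>n. 0 \<le> a k \<and> 0 \<le> b k" and
    expansion: "\<forall>p q. (p - q) ^ n = (\<Sum>k\<le>n. w k * (a k * p + b k * q) ^ n)" and
    cost: "(\<Sum>k\<le>n. \<bar>w k\<bar> * (a k * B + b k * A) ^ n) \<le> 2 ^ (n - 1) * (B + A) ^ n"
    by blast
  have "(p - q) ^ n = (\<Sum>k\<le>n. ((-1) ^ n * w k) * (b k * p + a k * q) ^ n)" for p q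
  proof -
    have "(p - q) ^ n = (-1) ^ n * (q - p) ^ n"
      by (metis minus_diff_eq power_minus)
    also have "\<dots> = (-1) ^ n * (\<Sum>k\<le>n. w k * (a k * q + b k * p) ^ n)"
      using expansion by simp
    also have "\<dots> = (\<Sum>k\<le>n. ((-1) ^ n * w k) * (b k * p + a k * q) ^ n)"
      by (simp add: sum_distrib_left mult.assoc add.commute)
    finally show ?thesis .
  qed
  moreover have "(\<Sum>k\<le>n. \<bar>(-1) ^ n * w k\<bar> * (b k * A + a k * B) ^ n) \<le> 2 ^ (n - 1) * (A + B) ^ n"
  proof -
    have "(\<Sum>k\<le>n. \<bar>(-1) ^ n * w k\<bar> * (b k * A + a k * B) ^ n) = (\<Sum>k\<le>n. \<bar>w k\<bar> * (a k * B + b k * A) ^ n)"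
      by (intro sum.cong refl) (simp add: abs_mult add.commute)
    with cost show ?thesis by (simp add: add.commute[of B A])
  qed
  ultimately show ?thesis using ab
    by (intro exI[where x = "\<lambda>k. (-1) ^ n * w k"] exI[where x = b] exI[where x = a]) auto
qed

lemma tensor_poly_Nil [simp]: "tensor_poly n f [] = 0"
  by (simp add: tensor_poly_def)

lemma tensor_poly_Cons [simp]: "tensor_poly n f ((a, x) # ys) = a * f x ^ n + tensor_poly n f ys"
  by (simp add: tensor_poly_def)

lemma tensor_poly_append [simp]: "tensor_poly n f (xs @ ys) = tensor_poly n f xs + tensor_poly n f ys"
  by (simp add: tensor_poly_def)

lemma tensor_poly_scale: "tensor_poly n f (map (\<lambda>(b, x). (a * b, x)) ys) = a * tensor_poly n f ys"
  by (induction ys) (auto simp: algebra_simps)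

lemma tensor_poly_upt: "tensor_poly n f (map (\<lambda>k. (c k, x k)) [0..<M]) = (\<Sum>k<M. c k * f (x k) ^ n)"
  by (induction M) auto

lemma rep_cost_Nil [simp]: "rep_cost N n [] = 0"
  by (simp add: rep_cost_def)

lemma rep_cost_Cons [simp]: "rep_cost N n ((a, x) # ys) = \<bar>a\<bar> * N x ^ n + rep_cost N n ys"
  by (simp add: rep_cost_def)

lemma rep_cost_append [simp]: "rep_cost N n (xs @ ys) = rep_cost N n xs + rep_cost N n ys"
  by (simp add: rep_cost_def)

lemma rep_cost_scale: "rep_cost N n (map (\<lambda>(b, x). (a * b, x)) ys) = \<bar>a\<bar> * rep_cost N n ys"
  by (induction ys) (auto simp: algebra_simps abs_mult)

lemma rep_cost_upt: "rep_cost N n (map (\<lambda>k. (c k, x k)) [0..<M]) = (\<Sum>k<M. \<bar>c k\<bar> * N (x k) ^ n)"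
  by (induction M) auto

lemma rep_cost_nonneg: "(\<And>x. x \<in> snd ` set ys \<Longrightarrow> 0 \<le> N x) \<Longrightarrow> 0 \<le> rep_cost N n ys"
  by (induction ys) auto

lemma rep_cost_cong:
  "(\<And>x. x \<in> snd ` set ys \<Longrightarrow> N x = N' x) \<Longrightarrow> rep_cost N n ys = rep_cost N' n ys"
  by (induction ys) auto

lemma tendsto_rep_cost_shift:
  "((\<lambda>d. rep_cost (\<lambda>x. N x + d) n ys) \<longlongrightarrow> rep_cost N n ys) (at_right 0)"
  by (induction ys) (auto intro!: tendsto_eq_intros)

lemma abs_sum_list_le_rep_cost:
  assumes "\<And>x. x \<in> snd ` set ys \<Longrightarrow> \<bar>G x\<bar> \<le> N x ^ n"
  shows "\<bar>\<Sum>(a, x)\<leftarrow>ys. a * G x\<bar> \<le> rep_cost N n ys"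
  using assms
proof (induction ys)
  case (Cons y ys)
  obtain a x where y: "y = (a, x)" by (cases y)
  have "\<bar>a * G x\<bar> \<le> \<bar>a\<bar> * N x ^ n"
    using Cons.prems y by (auto simp: abs_mult intro!: mult_left_mono)
  moreover have "\<bar>\<Sum>(a, x)\<leftarrow>ys. a * G x\<bar> \<le> rep_cost N n ys"
    using Cons by auto
  ultimately show ?case using y abs_triangle_ineq[of "a * G x"] by simp
qed simp

lemma pi_s_norm_cong:
  assumes "\<And>x. x \<in> V \<Longrightarrow> N x = N' x"
  shows "pi_s_norm V N n xs = pi_s_norm V N' n xs"
proof -
  have "rep_cost N n ys = rep_cost N' n ys" if "snd ` set ys \<subseteq> V" for ys
    using that assms by (intro rep_cost_cong) auto
  then show ?thesis unfolding pi_s_norm_def by (metis (lifting) list.set_map)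
qed

locale ordered_normed =
  fixes V :: "'a::real_vector set" and N :: "'a \<Rightarrow> real" and K :: "'a set"
  assumes ordered_normed_space: "ordered_normed_space V N K"
begin

lemma cone_subset: "K \<subseteq> V"
  and cone_add: "x \<in> K \<Longrightarrow> y \<in> K \<Longrightarrow> x + y \<in> K"
  and cone_scaleR: "0 \<le> c \<Longrightarrow> x \<in> K \<Longrightarrow> c *\<^sub>R x \<in> K"
  and subspace_scaleR: "x \<in> V \<Longrightarrow> c *\<^sub>R x \<in> V"
  and subspace_add: "x \<in> V \<Longrightarrow> y \<in> V \<Longrightarrow> x + y \<in> V"
  and N_nonneg: "x \<in> V \<Longrightarrow> 0 \<le> N x"
  and N_scaleR: "x \<in> V \<Longrightarrow> N (c *\<^sub>R x) = \<bar>c\<bar> * N x"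
  and N_triangle: "x \<in> V \<Longrightarrow> y \<in> V \<Longrightarrow> N (x + y) \<le> N x + N y"
  and cone_decomposition: "x \<in> V \<Longrightarrow> \<exists>y\<in>K. \<exists>z\<in>K. x = y - z"
  using ordered_normed_space
  by (auto simp: ordered_normed_space_def closed_convex_cone_def is_subspace_def is_norm_on_def)

lemma N_conic_combination:
  assumes "y \<in> V" "z \<in> V" "0 \<le> a" "0 \<le> b"
  shows "N (a *\<^sub>R y + b *\<^sub>R z) \<le> a * N y + b * N z"
  using N_triangle[of "a *\<^sub>R y" "b *\<^sub>R z"] assms by (simp add: subspace_scaleR N_scaleR)

lemma lin_functional_on_combination:
  assumes "lin_functional_on V f" "y \<in> V" "z \<in> V"
  shows "f (a *\<^sub>R y + b *\<^sub>R z) = a * f y + b * f z"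
  using assms subspace_scaleR by (simp add: lin_functional_on_def)

lemma plus_norm_lessD:
  assumes "x \<in> V" "plus_norm N K x < s"
  shows "\<exists>y\<in>K. \<exists>z\<in>K. x = y - z \<and> N y + N z < s"
proof -
  have "{N y + N z | y z. y \<in> K \<and> z \<in> K \<and> x = y - z} \<noteq> {}"
    using cone_decomposition[OF assms(1)] by blast
  moreover note assms(2)[unfolded plus_norm_def]
  ultimately have "\<exists>v\<in>{N y + N z | y z. y \<in> K \<and> z \<in> K \<and> x = y - z}. v < s"
    by (rule cInf_lessD)
  then show ?thesis by blast
qed

lemma positive_representation_power:
  assumes n: "n \<ge> 1" and x: "x \<in> V" and s: "plus_norm N K x < s"
  shows "\<exists>L. snd ` set L \<subseteq> K \<and> (\<forall>f. lin_functional_on V f \<longrightarrow> tensor_poly n f L = f x ^ n) \<and>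
             rep_cost N n L \<le> 2 ^ (n - 1) * s ^ n"
proof -
  obtain y z where y: "y \<in> K" and z: "z \<in> K" and xyz: "x = y - z" and yz: "N y + N z < s"
    using plus_norm_lessD[OF x s] by blast
  have yV: "y \<in> V" and zV: "z \<in> V" using y z cone_subset by auto
  define g where "g = s - N y - N z"
  define A where "A = N y + g / 4"
  \<comment> \<open>The Chebyshev construction needs \<open>A \<noteq> B\<close>.\<close>
  define B where "B = N z + (if N y = N z then g / 2 else g / 4)"
  have g: "0 < g" "s = N y + N z + g" using yz by (simp_all add: g_def)
  have A: "0 < A" "N y \<le> A" and B: "0 < B" "N z \<le> B"
    using N_nonneg[OF yV] N_nonneg[OF zV] g by (auto simp: A_def B_def)
  have "A \<noteq> B" and AB: "A + B \<le> s" using g by (auto simp: A_def B_def)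
  from diff_power_positive_expansion[OF n A(1) B(1) this(1)] obtain w a b where
    ab: "\<forall>k\<le>n. 0 \<le> a k \<and> 0 \<le> b k" and
    expansion: "\<forall>p q. (p - q) ^ n = (\<Sum>k\<le>n. w k * (a k * p + b k * q) ^ n)" and
    cost: "(\<Sum>k\<le>n. \<bar>w k\<bar> * (a k * A + b k * B) ^ n) \<le> 2 ^ (n - 1) * (A + B) ^ n"
    by blast
  define L where "L = map (\<lambda>k. (w k, a k *\<^sub>R y + b k *\<^sub>R z)) [0..<Suc n]"
  have "snd ` set L \<subseteq> K"
    using ab y z by (auto simp: L_def intro!: cone_add cone_scaleR)
  moreover have "tensor_poly n f L = f x ^ n" if f: "lin_functional_on V f" for f
  proof -
    have "tensor_poly n f L = (\<Sum>k\<le>n. w k * (a k * f y + b k * f z) ^ n)"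
      unfolding L_def tensor_poly_upt lessThan_Suc_atMost
      using lin_functional_on_combination[OF f yV zV] by simp
    also have "\<dots> = (f y - f z) ^ n" using expansion by simp
    also have "\<dots> = f x ^ n"
      using lin_functional_on_combination[OF f yV zV, of 1 "-1"] xyz by simp
    finally show ?thesis .
  qed
  moreover have "rep_cost N n L \<le> 2 ^ (n - 1) * s ^ n"
  proof -
    have "rep_cost N n L = (\<Sum>k\<le>n. \<bar>w k\<bar> * N (a k *\<^sub>R y + b k *\<^sub>R z) ^ n)"
      unfolding L_def rep_cost_upt lessThan_Suc_atMost ..
    also have "\<dots> \<le> (\<Sum>k\<le>n. \<bar>w k\<bar> * (a k * A + b k * B) ^ n)"
    proof (intro sum_mono mult_left_mono power_mono)
      fix k assume "k \<in> {..n}"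
      then have "0 \<le> a k" "0 \<le> b k" using ab by auto
      then show "N (a k *\<^sub>R y + b k *\<^sub>R z) \<le> a k * A + b k * B"
        using N_conic_combination[OF yV zV] A B
        by (meson add_mono mult_left_mono order_trans)
      show "0 \<le> N (a k *\<^sub>R y + b k *\<^sub>R z)"
        by (intro N_nonneg subspace_add subspace_scaleR yV zV)
    qed simp
    also have "\<dots> \<le> 2 ^ (n - 1) * (A + B) ^ n" by (rule cost)
    also have "\<dots> \<le> 2 ^ (n - 1) * s ^ n"
      using A B AB by (intro mult_left_mono power_mono) auto
    finally show ?thesis .
  qed
  ultimately show ?thesis by blast
qed

lemma positive_representation_list:
  assumes n: "n \<ge> 1" and d: "0 < d"
  shows "snd ` set ys \<subseteq> V \<Longrightarrow>
    \<exists>zs. snd ` set zs \<subseteq> K \<and> (\<forall>f. lin_functional_on V f \<longrightarrow> tensor_poly n f zs = tensor_poly n f ys) \<and>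
         rep_cost N n zs \<le> 2 ^ (n - 1) * rep_cost (\<lambda>x. plus_norm N K x + d) n ys"
proof (induction ys)
  case Nil
  show ?case by (intro exI[of _ "[]"]) simp
next
  case (Cons y ys)
  obtain a x where y: "y = (a, x)" by (cases y)
  with Cons.prems have x: "x \<in> V" and ys: "snd ` set ys \<subseteq> V" by auto
  obtain L where L: "snd ` set L \<subseteq> K" "\<forall>f. lin_functional_on V f \<longrightarrow> tensor_poly n f L = f x ^ n"
    and cost_L: "rep_cost N n L \<le> 2 ^ (n - 1) * (plus_norm N K x + d) ^ n"
    using positive_representation_power[OF n x, of "plus_norm N K x + d"] d by auto
  obtain zs where zs: "snd ` set zs \<subseteq> K" "\<forall>f. lin_functional_on V f \<longrightarrow> tensor_poly n f zs = tensor_poly n f ys"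
    and cost_zs: "rep_cost N n zs \<le> 2 ^ (n - 1) * rep_cost (\<lambda>x. plus_norm N K x + d) n ys"
    using Cons.IH[OF ys] by blast
  define W where "W = map (\<lambda>(b, w). (a * b, w)) L @ zs"
  have "snd ` set W \<subseteq> K" using L zs by (auto simp: W_def)
  moreover have "\<forall>f. lin_functional_on V f \<longrightarrow> tensor_poly n f W = tensor_poly n f (y # ys)"
    using L zs by (simp add: W_def tensor_poly_scale y)
  moreover have "rep_cost N n W \<le> 2 ^ (n - 1) * rep_cost (\<lambda>x. plus_norm N K x + d) n (y # ys)"
  proof -
    have "rep_cost N n W = \<bar>a\<bar> * rep_cost N n L + rep_cost N n zs"
      by (simp add: W_def rep_cost_scale)
    with mult_left_mono[OF cost_L abs_ge_zero[of a]] cost_zs show ?thesis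
      by (simp add: y algebra_simps)
  qed
  ultimately show ?case by blast
qed

lemma pi_s_plus_norm_le:
  assumes n: "n \<ge> 1" and xs: "xs \<in> sym_tensors V"
  shows "pi_s_plus_norm V N K n xs \<le> 2 ^ (n - 1) * pi_s_norm V (plus_norm N K) n xs"
proof -
  define P where "P = pi_s_plus_norm V N K n xs"
  have bdd: "bdd_below {rep_cost N n ys | ys. set (map snd ys) \<subseteq> K \<and> sym_tensor_eq V n ys xs}"
    unfolding bdd_below_def using cone_subset N_nonneg
    by (intro exI[of _ 0]) (auto intro!: rep_cost_nonneg)
  have "P \<le> 2 ^ (n - 1) * rep_cost (plus_norm N K) n ys"
    if ys: "snd ` set ys \<subseteq> V" "sym_tensor_eq V n ys xs" for ys
  proof (rule tendsto_lowerbound)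
    show "((\<lambda>d. 2 ^ (n - 1) * rep_cost (\<lambda>x. plus_norm N K x + d) n ys)
            \<longlongrightarrow> 2 ^ (n - 1) * rep_cost (plus_norm N K) n ys) (at_right 0)"
      by (intro tendsto_mult tendsto_const tendsto_rep_cost_shift)
    show "\<forall>\<^sub>F d in at_right 0. P \<le> 2 ^ (n - 1) * rep_cost (\<lambda>x. plus_norm N K x + d) n ys"
      unfolding eventually_at_right_field
    proof (intro exI[of _ 1] conjI allI impI)
      fix d :: real assume "0 < d"
      from positive_representation_list[OF n this ys(1)] obtain zs where
        "snd ` set zs \<subseteq> K" "\<forall>f. lin_functional_on V f \<longrightarrow> tensor_poly n f zs = tensor_poly n f ys"
        and cost: "rep_cost N n zs \<le> 2 ^ (n - 1) * rep_cost (\<lambda>x. plus_norm N K x + d) n ys"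
        by blast
      with ys(2) have "P \<le> rep_cost N n zs"
        unfolding P_def pi_s_plus_norm_def sym_tensor_eq_def
        by (intro cInf_lower[OF _ bdd[unfolded sym_tensor_eq_def]]) auto
      with cost show "P \<le> 2 ^ (n - 1) * rep_cost (\<lambda>x. plus_norm N K x + d) n ys" by simp
    qed simp
  qed simp
  moreover have "{rep_cost (plus_norm N K) n ys | ys. set (map snd ys) \<subseteq> V \<and> sym_tensor_eq V n ys xs} \<noteq> {}"
    using xs by (auto simp: sym_tensors_def sym_tensor_eq_def)
  ultimately have "P / 2 ^ (n - 1) \<le> pi_s_norm V (plus_norm N K) n xs"
    unfolding pi_s_norm_def by (intro cInf_greatest) (auto simp: field_simps)
  then show ?thesis by (simp add: P_def field_simps)
qed

end

lemma scaleR_fun_apply [simp]: "(c *\<^sub>R f) x = c *\<^sub>R f x"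
  by (simp add: scaleR_fun_def)

lemma l1_spaceI: "summable (\<lambda>i. \<bar>x i\<bar>) \<Longrightarrow> (\<And>i. m \<le> enat i \<Longrightarrow> x i = 0) \<Longrightarrow> x \<in> l1_space m"
  by (simp add: l1_space_def)

lemma l1_space_summable: "x \<in> l1_space m \<Longrightarrow> summable (\<lambda>i. \<bar>x i\<bar>)"
  and l1_space_vanishes: "x \<in> l1_space m \<Longrightarrow> m \<le> enat i \<Longrightarrow> x i = 0"
  by (simp_all add: l1_space_def)

lemma summable_abs_add:
  fixes x y :: "nat \<Rightarrow> real"
  assumes "summable (\<lambda>i. \<bar>x i\<bar>)" "summable (\<lambda>i. \<bar>y i\<bar>)"
  shows "summable (\<lambda>i. \<bar>x i + y i\<bar>)"
  by (rule summable_comparison_test'[OF summable_add[OF assms], of 0]) (simp add: abs_triangle_ineq)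

lemma l1_space_add: "x \<in> l1_space m \<Longrightarrow> y \<in> l1_space m \<Longrightarrow> x + y \<in> l1_space m"
  by (intro l1_spaceI) (auto simp: l1_space_vanishes intro!: summable_abs_add dest: l1_space_summable)

lemma l1_space_scaleR:
  assumes "x \<in> l1_space m"
  shows "c *\<^sub>R x \<in> l1_space m"
  using assms summable_mult[OF l1_space_summable[OF assms], of "\<bar>c\<bar>"]
  by (intro l1_spaceI) (auto simp: l1_space_vanishes abs_mult)

lemma l1_space_diff: "x \<in> l1_space m \<Longrightarrow> y \<in> l1_space m \<Longrightarrow> x - y \<in> l1_space m"
  using l1_space_add[of x m "(-1) *\<^sub>R y"] l1_space_scaleR[of y m "-1"] by (simp add: fun_eq_iff)

lemma zero_in_l1_space: "0 \<in> l1_space m"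
  by (intro l1_spaceI) auto

lemma l1_norm_nonneg: "x \<in> l1_space m \<Longrightarrow> 0 \<le> l1_norm x"
  unfolding l1_norm_def by (intro suminf_nonneg l1_space_summable) auto


lemma sum_abs_le_l1_norm: "x \<in> l1_space m \<Longrightarrow> finite I \<Longrightarrow> (\<Sum>i\<in>I. \<bar>x i\<bar>) \<le> l1_norm x"
  unfolding l1_norm_def by (rule sum_le_suminf) (auto dest: l1_space_summable)

lemma l1_norm_triangle: "x \<in> l1_space m \<Longrightarrow> y \<in> l1_space m \<Longrightarrow> l1_norm (x + y) \<le> l1_norm x + l1_norm y"
  unfolding l1_norm_def
  by (subst suminf_add)
     (auto intro!: suminf_le summable_abs_add summable_add abs_triangle_ineq dest: l1_space_summable)

lemma l1_norm_scaleR: "x \<in> l1_space m \<Longrightarrow> l1_norm (c *\<^sub>R x) = \<bar>c\<bar> * l1_norm x"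
  unfolding l1_norm_def by (simp add: abs_mult suminf_mult l1_space_summable)

lemma l1_norm_eq_0_iff: "x \<in> l1_space m \<Longrightarrow> l1_norm x = 0 \<longleftrightarrow> x = 0"
  unfolding l1_norm_def using suminf_eq_zero_iff[OF l1_space_summable, of x m]
  by (auto simp: fun_eq_iff)

lemma l1_cone_decomposition:
  assumes x: "x \<in> l1_space m"
  shows "\<exists>y\<in>l1_cone m. \<exists>z\<in>l1_cone m. x = y - z \<and> l1_norm y + l1_norm z = l1_norm x"
proof -
  define y where "y i = max (x i) 0" for i
  define z where "z i = max (- x i) 0" for i
  have le: "\<bar>y i\<bar> \<le> \<bar>x i\<bar>" "\<bar>z i\<bar> \<le> \<bar>x i\<bar>" for i by (simp_all add: y_def z_def)
  have summable: "summable (\<lambda>i. \<bar>y i\<bar>)" "summable (\<lambda>i. \<bar>z i\<bar>)"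
    using summable_comparison_test'[OF l1_space_summable[OF x]] le by force+
  have "m \<le> enat i \<Longrightarrow> y i = 0 \<and> z i = 0" and "0 \<le> y i \<and> 0 \<le> z i" for i
    using l1_space_vanishes[OF x] by (simp_all add: y_def z_def)
  with summable have "y \<in> l1_cone m" "z \<in> l1_cone m"
    by (auto simp: l1_cone_def intro!: l1_spaceI)
  moreover have "x = y - z" by (auto simp: fun_eq_iff y_def z_def)
  moreover have "l1_norm y + l1_norm z = l1_norm x"
  proof -
    have "\<bar>y i\<bar> + \<bar>z i\<bar> = \<bar>x i\<bar>" for i by (simp add: y_def z_def)
    then show ?thesis unfolding l1_norm_def suminf_add[OF summable] by simp
  qed
  ultimately show ?thesis by blast
qed

lemma plus_norm_l1_norm:
  assumes x: "x \<in> l1_space m"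
  shows "plus_norm l1_norm (l1_cone m) x = l1_norm x"
  unfolding plus_norm_def
proof (rule antisym)
  let ?S = "{l1_norm y + l1_norm z | y z. y \<in> l1_cone m \<and> z \<in> l1_cone m \<and> x = y - z}"
  have "l1_norm x \<in> ?S" using l1_cone_decomposition[OF x] by force
  moreover have "bdd_below ?S"
    by (rule bdd_belowI[of _ 0]) (auto simp: l1_cone_def intro!: add_nonneg_nonneg l1_norm_nonneg)
  ultimately show "Inf ?S \<le> l1_norm x" by (rule cInf_lower)
  have "l1_norm x \<le> v" if "v \<in> ?S" for v
  proof -
    from that obtain y z where "y \<in> l1_space m" "z \<in> l1_space m" "x = y - z" "v = l1_norm y + l1_norm z"
      by (auto simp: l1_cone_def)
    then show ?thesis
      using l1_norm_triangle[of y m "-z"] l1_norm_scaleR[of z m "-1"] l1_space_scaleR[of z m "-1"]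
      by simp
  qed
  then show "l1_norm x \<le> Inf ?S"
    using \<open>l1_norm x \<in> ?S\<close> by (intro cInf_greatest) auto
qed

lemma l1_cone_closed:
  assumes s: "\<forall>k. s k \<in> l1_cone m" and x: "x \<in> l1_space m"
    and lim: "(\<lambda>k. l1_norm (s k - x)) \<longlonglongrightarrow> 0"
  shows "x \<in> l1_cone m"
proof -
  have "0 \<le> x i" for i
  proof (rule ccontr)
    assume "\<not> 0 \<le> x i"
    then obtain k where k: "l1_norm (s k - x) < - x i"
      using order_tendstoD(2)[OF lim, of "- x i"] by (auto dest: eventually_happens)
    have "\<bar>s k i - x i\<bar> \<le> l1_norm (s k - x)"
      using sum_abs_le_l1_norm[of "s k - x" m "{i}"] s x by (simp add: l1_cone_def l1_space_diff)
    moreover have "0 \<le> s k i" using s by (simp add: l1_cone_def)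
    ultimately show False using k by linarith
  qed
  with x show ?thesis by (simp add: l1_cone_def)
qed

lemma ordered_normed_l1: "ordered_normed (l1_space m) l1_norm (l1_cone m)"
  unfolding ordered_normed_def ordered_normed_space_def
proof (intro conjI)
  show "is_subspace (l1_space m)"
    unfolding is_subspace_def using zero_in_l1_space l1_space_add l1_space_scaleR by blast
  show "is_norm_on (l1_space m) l1_norm"
    unfolding is_norm_on_def using l1_norm_nonneg l1_norm_eq_0_iff l1_norm_scaleR l1_norm_triangle by blast
  show "closed_convex_cone (l1_space m) l1_norm (l1_cone m)"
    unfolding closed_convex_cone_def
  proof (intro conjI allI impI ballI)
    have "0 \<in> l1_cone m" by (simp add: l1_cone_def zero_in_l1_space)
    then show "l1_cone m \<noteq> {}" by blast
    show "x \<in> l1_cone m"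
      if "\<forall>k. s k \<in> l1_cone m" "x \<in> l1_space m" "(\<lambda>k. l1_norm (s k - x)) \<longlonglongrightarrow> 0" for s x
      using that by (rule l1_cone_closed)
  qed (auto simp: l1_cone_def l1_space_add l1_space_scaleR)
  show "\<forall>x\<in>l1_space m. \<exists>y\<in>l1_cone m. \<exists>z\<in>l1_cone m. x = y - z"
    using l1_cone_decomposition by blast
  show "\<exists>C. \<forall>x\<in>l1_space m. l1_norm x \<le> 1 \<longrightarrow> plus_norm l1_norm (l1_cone m) x \<le> C"
    using plus_norm_l1_norm by (intro exI[of _ 1]) auto
qed

lemma pi_s_norm_nonneg:
  assumes "\<And>x. x \<in> V \<Longrightarrow> 0 \<le> N x" and "xs \<in> sym_tensors V"
  shows "0 \<le> pi_s_norm V N n xs"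
  unfolding pi_s_norm_def
proof (rule cInf_greatest)
  show "{rep_cost N n ys |ys. set (map snd ys) \<subseteq> V \<and> sym_tensor_eq V n ys xs} \<noteq> {}"
    using assms(2) by (auto simp: sym_tensors_def sym_tensor_eq_def)
qed (use assms(1) in \<open>auto intro!: rep_cost_nonneg\<close>)

lemma sum_list_sum_swap: "(\<Sum>x\<leftarrow>xs. \<Sum>j\<in>J. f x j) = (\<Sum>j\<in>J. \<Sum>x\<leftarrow>xs. f x j)"
  by (induction xs) (auto simp: sum.distrib)

lemma poly_eq_sum_coeff:
  fixes p :: "real poly"
  assumes "degree p \<le> n"
  shows "poly p x = (\<Sum>i\<le>n. coeff p i * x ^ i)"
  unfolding poly_altdef
  by (rule sum.mono_neutral_left) (use assms in \<open>auto simp: coeff_eq_0\<close>)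

text \<open>
  If \<open>\<Sum> a (r w + t s w)\<^sup>n\<close> is independent of \<open>t\<close>, all mixed moments \<open>\<Sum> a r\<^sup>n\<^sup>-\<^sup>j s\<^sup>j\<close>
  with \<open>j \<ge> 1\<close> vanish, so only the top coefficient of \<open>p\<close> survives in its homogenisation.
\<close>
lemma sum_list_homogenized_eq:
  fixes ys :: "(real \<times> 'a) list" and p :: "real poly"
  assumes const: "\<And>t. (\<Sum>(a, w)\<leftarrow>ys. a * (r w + t * s w) ^ n) = C" and deg: "degree p \<le> n"
  shows "(\<Sum>(a, w)\<leftarrow>ys. a * (\<Sum>i\<le>n. coeff p i * r w ^ i * s w ^ (n - i))) = coeff p n * C"
proof -
  define M where "M j = (\<Sum>(a, w)\<leftarrow>ys. a * r w ^ (n - j) * s w ^ j)" for j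
  have "(\<Sum>j\<le>n. (of_nat (n choose j) * M j) * t ^ j) = C" for t
  proof -
    have "a * (r w + t * s w) ^ n = (\<Sum>j\<le>n. of_nat (n choose j) * (a * r w ^ (n - j) * s w ^ j) * t ^ j)"
      for a w
    proof -
      have "(r w + t * s w) ^ n = (t * s w + r w) ^ n" by (simp add: add.commute)
      also have "\<dots> = (\<Sum>j\<le>n. of_nat (n choose j) * (t * s w) ^ j * r w ^ (n - j))"
        by (rule binomial_ring)
      finally show ?thesis by (simp add: sum_distrib_left power_mult_distrib mult_ac)
    qed
    then have "(\<Sum>(a, w)\<leftarrow>ys. a * (r w + t * s w) ^ n) = (\<Sum>j\<le>n. (of_nat (n choose j) * M j) * t ^ j)"
      by (simp only: split_def sum_list_sum_swap M_def sum_list_const_mult sum_list_mult_const)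
    with const show ?thesis by simp
  qed
  then have M: "M 0 = C" "\<And>j. 1 \<le> j \<Longrightarrow> j \<le> n \<Longrightarrow> M j = 0"
    using polyfun_eq_const[of "\<lambda>j. of_nat (n choose j) * M j" n C] by auto
  have "(\<Sum>(a, w)\<leftarrow>ys. a * (\<Sum>i\<le>n. coeff p i * r w ^ i * s w ^ (n - i)))
        = (\<Sum>i\<le>n. coeff p i * (\<Sum>(a, w)\<leftarrow>ys. a * r w ^ i * s w ^ (n - i)))"
    by (simp only: split_def sum_distrib_left sum_list_sum_swap)
       (intro sum.cong refl, simp add: sum_list_const_mult[symmetric] mult_ac)
  also have "\<dots> = (\<Sum>i\<le>n. coeff p i * M (n - i))"
    by (intro sum.cong refl) (simp add: M_def)
  also have "\<dots> = (\<Sum>i\<le>n. if i = n then coeff p n * C else 0)"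
    by (rule sum.cong) (auto simp: M)
  finally show ?thesis by simp
qed

lemma abs_homogenized_le:
  fixes p :: "real poly"
  assumes bound: "\<And>u. \<bar>u\<bar> \<le> 1 \<Longrightarrow> \<bar>poly p u\<bar> \<le> 1" and deg: "degree p \<le> n" and rs: "\<bar>r\<bar> \<le> s"
  shows "\<bar>\<Sum>i\<le>n. coeff p i * r ^ i * s ^ (n - i)\<bar> \<le> s ^ n"
proof (cases "s = 0")
  case True
  then have "r = 0" using rs by simp
  have "(0::real) ^ i * 0 ^ (n - i) = 0 ^ n" if "i \<le> n" for i
    using that by (metis power_add le_add_diff_inverse)
  then have "(\<Sum>i\<le>n. coeff p i * r ^ i * s ^ (n - i)) = (\<Sum>i\<le>n. 0 ^ n * coeff p i)"
    using True \<open>r = 0\<close> by (intro sum.cong refl) (simp add: mult.assoc)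
  also have "\<dots> = 0 ^ n * poly p 1"
    by (simp add: poly_eq_sum_coeff[OF deg] sum_distrib_left)
  finally have "(\<Sum>i\<le>n. coeff p i * r ^ i * s ^ (n - i)) = 0 ^ n * poly p 1" .
  with bound[of 1] True show ?thesis by (cases n) (simp_all add: abs_mult)
next
  case False
  then have s: "0 < s" using rs by linarith
  have "(\<Sum>i\<le>n. coeff p i * r ^ i * s ^ (n - i)) = (\<Sum>i\<le>n. s ^ n * (coeff p i * (r / s) ^ i))"
    using s by (intro sum.cong refl) (simp add: power_divide power_diff)
  also have "\<dots> = s ^ n * poly p (r / s)"
    by (simp add: poly_eq_sum_coeff[OF deg] sum_distrib_left)
  finally have "(\<Sum>i\<le>n. coeff p i * r ^ i * s ^ (n - i)) = s ^ n * poly p (r / s)" .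
  moreover have "\<bar>poly p (r / s)\<bar> \<le> 1" using rs s by (intro bound) simp
  ultimately show ?thesis using s by (simp add: abs_mult mult_left_le)
qed

definition e0_minus_e1 :: "nat \<Rightarrow> real" where
  "e0_minus_e1 i = (if i = 0 then 1 else if i = 1 then -1 else 0)"

lemma e0_minus_e1_in_l1_space:
  assumes "2 \<le> m"
  shows "e0_minus_e1 \<in> l1_space m"
proof (rule l1_spaceI)
  show "summable (\<lambda>i. \<bar>e0_minus_e1 i\<bar>)"
    by (rule summable_finite[of "{0, 1}"]) (auto simp: e0_minus_e1_def)
  fix i assume "m \<le> enat i"
  with assms have "(2::enat) \<le> enat i" by (rule order_trans)
  then have "2 \<le> i" by (simp add: numeral_eq_enat)
  then show "e0_minus_e1 i = 0" by (simp add: e0_minus_e1_def)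
qed

lemma l1_norm_e0_minus_e1: "l1_norm e0_minus_e1 = 2"
  unfolding l1_norm_def by (subst suminf_finite[of "{0, 1}"]) (auto simp: e0_minus_e1_def)

lemma lin_functional_on_coordinates: "lin_functional_on V (\<lambda>w. a * w 0 + b * w 1)"
  by (simp add: lin_functional_on_def algebra_simps)

lemma pi_s_norm_e0_minus_e1:
  assumes m: "2 \<le> m"
  shows "pi_s_norm (l1_space m) l1_norm n [(1, e0_minus_e1)] = 2 ^ n"
  unfolding pi_s_norm_def
proof (rule antisym)
  let ?S = "{rep_cost l1_norm n ys |ys. set (map snd ys) \<subseteq> l1_space m \<and>
                sym_tensor_eq (l1_space m) n ys [(1, e0_minus_e1)]}"
  have "2 ^ n \<in> ?S"
    using e0_minus_e1_in_l1_space[OF m] l1_norm_e0_minus_e1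
    by (auto simp: sym_tensor_eq_def intro!: exI[of _ "[(1, e0_minus_e1)]"])
  moreover have "bdd_below ?S"
    by (rule bdd_belowI[of _ 0]) (auto intro!: rep_cost_nonneg l1_norm_nonneg)
  ultimately show "Inf ?S \<le> 2 ^ n" by (rule cInf_lower)
  \<comment> \<open>Testing against the functional \<open>w\<^sub>0 - w\<^sub>1\<close>, of norm 1.\<close>
  have "2 ^ n \<le> rep_cost l1_norm n ys"
    if ys: "snd ` set ys \<subseteq> l1_space m" and eq: "sym_tensor_eq (l1_space m) n ys [(1, e0_minus_e1)]" for ys
  proof -
    define f where "f w = 1 * w 0 + (-1) * w (1::nat)" for w :: "nat \<Rightarrow> real"
    have "tensor_poly n f ys = tensor_poly n f [(1, e0_minus_e1)]"
      using eq lin_functional_on_coordinates unfolding sym_tensor_eq_def f_def by blast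
    then have "tensor_poly n f ys = 2 ^ n" by (simp add: f_def e0_minus_e1_def)
    moreover have "\<bar>f w ^ n\<bar> \<le> l1_norm w ^ n" if "w \<in> snd ` set ys" for w
    proof -
      have "\<bar>f w\<bar> \<le> l1_norm w"
        using sum_abs_le_l1_norm[of w m "{0, 1}"] that ys by (auto simp: f_def)
      then show ?thesis by (simp add: power_abs power_mono)
    qed
    ultimately show ?thesis
      using abs_sum_list_le_rep_cost[of ys "\<lambda>w. f w ^ n"] by (simp add: tensor_poly_def)
  qed
  then show "2 ^ n \<le> Inf ?S"
    using \<open>2 ^ n \<in> ?S\<close> by (intro cInf_greatest) auto
qed

lemma pi_s_plus_norm_e0_minus_e1_ge:
  assumes m: "2 \<le> m" and n: "n \<ge> 1"
  shows "2 ^ (n - 1) * 2 ^ n \<le> pi_s_plus_norm (l1_space m) l1_norm (l1_cone m) n [(1, e0_minus_e1)]"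
  unfolding pi_s_plus_norm_def
proof (rule cInf_greatest)
  obtain L where "snd ` set L \<subseteq> l1_cone m"
    "\<forall>f. lin_functional_on (l1_space m) f \<longrightarrow> tensor_poly n f L = f e0_minus_e1 ^ n"
    using ordered_normed.positive_representation_power[OF ordered_normed_l1 n
        e0_minus_e1_in_l1_space[OF m], of "plus_norm l1_norm (l1_cone m) e0_minus_e1 + 1"]
    by auto
  then show "{rep_cost l1_norm n ys |ys. set (map snd ys) \<subseteq> l1_cone m \<and>
               sym_tensor_eq (l1_space m) n ys [(1, e0_minus_e1)]} \<noteq> {}"
    by (auto simp: sym_tensor_eq_def)
next
  fix c assume "c \<in> {rep_cost l1_norm n ys |ys. set (map snd ys) \<subseteq> l1_cone m \<and>
                   sym_tensor_eq (l1_space m) n ys [(1, e0_minus_e1)]}"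
  then obtain ys where c: "c = rep_cost l1_norm n ys" and ys: "snd ` set ys \<subseteq> l1_cone m"
    and eq: "sym_tensor_eq (l1_space m) n ys [(1, e0_minus_e1)]"
    by auto
  define r where "r w = w 0 - w (1::nat)" for w :: "nat \<Rightarrow> real"
  define s where "s w = w 0 + w (1::nat)" for w :: "nat \<Rightarrow> real"
  define G where "G w = (\<Sum>i\<le>n. coeff (chebyshev n) i * r w ^ i * s w ^ (n - i))" for w
  \<comment> \<open>\<open>r + t s\<close> is the functional \<open>(1 + t) w\<^sub>0 + (t - 1) w\<^sub>1\<close>, with value 2 at
    \<open>e\<^sub>0 - e\<^sub>1\<close>.\<close>
  have "(\<Sum>(a, w)\<leftarrow>ys. a * (r w + t * s w) ^ n) = 2 ^ n" for t
  proof -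
    define g where "g w = (1 + t) * w 0 + (t - 1) * w (1::nat)" for w :: "nat \<Rightarrow> real"
    have "tensor_poly n g ys = tensor_poly n g [(1, e0_minus_e1)]"
      using eq lin_functional_on_coordinates unfolding sym_tensor_eq_def g_def by blast
    moreover have "g w = r w + t * s w" for w by (simp add: g_def r_def s_def algebra_simps)
    ultimately show ?thesis by (simp add: tensor_poly_def g_def e0_minus_e1_def)
  qed
  from sum_list_homogenized_eq[OF this degree_chebyshev]
  have "(\<Sum>(a, w)\<leftarrow>ys. a * G w) = 2 ^ (n - 1) * 2 ^ n"
    using n by (simp add: G_def coeff_chebyshev_degree)
  moreover have "\<bar>G w\<bar> \<le> l1_norm w ^ n" if "w \<in> snd ` set ys" for w
  proof -
    have w: "w \<in> l1_space m" "0 \<le> w 0" "0 \<le> w 1" using that ys by (auto simp: l1_cone_def)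
    have "\<bar>G w\<bar> \<le> s w ^ n"
      unfolding G_def using w
      by (intro abs_homogenized_le abs_poly_chebyshev_le_1 degree_chebyshev) (auto simp: r_def s_def)
    also have "\<dots> \<le> l1_norm w ^ n"
      using sum_abs_le_l1_norm[of w m "{0, 1}"] w by (intro power_mono) (auto simp: s_def)
    finally show ?thesis .
  qed
  then have "\<bar>\<Sum>(a, w)\<leftarrow>ys. a * G w\<bar> \<le> rep_cost l1_norm n ys"
    by (rule abs_sum_list_le_rep_cost)
  ultimately show "2 ^ (n - 1) * 2 ^ n \<le> c" using c by simp
qed

lemma pi_s_norm_plus_norm_l1:
  "pi_s_norm (l1_space m) (plus_norm l1_norm (l1_cone m)) n xs = pi_s_norm (l1_space m) l1_norm n xs"
  by (rule pi_s_norm_cong) (rule plus_norm_l1_norm)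

lemma c_pis_splus_l1:
  assumes m: "2 \<le> m" and n: "n \<ge> 1"
  shows "c_pis_splus n (l1_space m) l1_norm (l1_cone m) = ereal (2 ^ (n - 1))"
  unfolding c_pis_splus_def
proof (rule antisym)
  let ?V = "l1_space m" and ?K = "l1_cone m"
  show "(SUP xs\<in>{xs \<in> sym_tensors ?V. \<not> sym_tensor_eq ?V n xs []}.
          ereal (pi_s_plus_norm ?V l1_norm ?K n xs / pi_s_norm ?V l1_norm n xs)) \<le> ereal (2 ^ (n - 1))"
  proof (rule SUP_least)
    fix xs assume "xs \<in> {xs \<in> sym_tensors ?V. \<not> sym_tensor_eq ?V n xs []}"
    then have xs: "xs \<in> sym_tensors ?V" by simp
    have "pi_s_plus_norm ?V l1_norm ?K n xs \<le> 2 ^ (n - 1) * pi_s_norm ?V l1_norm n xs"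
      using ordered_normed.pi_s_plus_norm_le[OF ordered_normed_l1 n xs]
      by (simp add: pi_s_norm_plus_norm_l1)
    moreover have "0 \<le> pi_s_norm ?V l1_norm n xs"
      using l1_norm_nonneg xs by (rule pi_s_norm_nonneg)
    \<comment> \<open>If the norm vanishes, the quotient is \<open>0\<close> by the convention \<open>x / 0 = 0\<close>.\<close>
    ultimately show "ereal (pi_s_plus_norm ?V l1_norm ?K n xs / pi_s_norm ?V l1_norm n xs) \<le> ereal (2 ^ (n - 1))"
      by (cases "pi_s_norm ?V l1_norm n xs = 0") (simp_all add: divide_le_eq)
  qed
  have "tensor_poly n (\<lambda>w. 1 * w 0 + (-1) * w 1) [(1, e0_minus_e1)]
        \<noteq> tensor_poly n (\<lambda>w. 1 * w 0 + (-1) * w 1) []"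
    by (simp add: e0_minus_e1_def)
  then have "\<not> sym_tensor_eq ?V n [(1, e0_minus_e1)] []"
    unfolding sym_tensor_eq_def using lin_functional_on_coordinates by blast
  then have "[(1, e0_minus_e1)] \<in> {xs \<in> sym_tensors ?V. \<not> sym_tensor_eq ?V n xs []}"
    using e0_minus_e1_in_l1_space[OF m] by (simp add: sym_tensors_def)
  moreover have "2 ^ (n - 1) \<le> pi_s_plus_norm ?V l1_norm ?K n [(1, e0_minus_e1)]
                                / pi_s_norm ?V l1_norm n [(1, e0_minus_e1)]"
    using pi_s_plus_norm_e0_minus_e1_ge[OF m n] by (simp add: pi_s_norm_e0_minus_e1[OF m] field_simps)
  ultimately show "ereal (2 ^ (n - 1)) \<le> (SUP xs\<in>{xs \<in> sym_tensors ?V. \<not> sym_tensor_eq ?V n xs []}.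
          ereal (pi_s_plus_norm ?V l1_norm ?K n xs / pi_s_norm ?V l1_norm n xs))"
    by (intro SUP_upper2) auto
qed

theorem theorem6p1:
  shows
  "(\<forall>n::nat. n \<ge> 1 \<longrightarrow>
      (\<forall>(V::'a::real_vector set) N K. ordered_normed_space V N K \<longrightarrow>
         (\<forall>xs \<in> sym_tensors V.
            pi_s_plus_norm V N K n xs \<le> 2 ^ (n - 1) * pi_s_norm V (plus_norm N K) n xs))
    \<and> (\<forall>C::real. C < 2 ^ (n - 1) \<longrightarrow>
         (\<exists>(V::(nat \<Rightarrow> real) set) N K. ordered_normed_space V N K \<and>
            (\<exists>xs \<in> sym_tensors V.
               \<not> pi_s_plus_norm V N K n xs \<le> C * pi_s_norm V (plus_norm N K) n xs))))
   \<and>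
   (\<forall>(m::enat) (n::nat). 2 \<le> m \<and> 1 \<le> n \<longrightarrow>
      c_pis_splus n (l1_space m) l1_norm (l1_cone m) = ereal (2 ^ (n - 1)))"
proof (intro conjI allI impI ballI)
  fix n :: nat and V :: "'a set" and N K xs
  assume "n \<ge> 1" "ordered_normed_space V N K" "xs \<in> sym_tensors V"
  then show "pi_s_plus_norm V N K n xs \<le> 2 ^ (n - 1) * pi_s_norm V (plus_norm N K) n xs"
    by (intro ordered_normed.pi_s_plus_norm_le) (simp_all add: ordered_normed_def)
next
  fix n :: nat and C :: real
  assume n: "n \<ge> 1" and C: "C < 2 ^ (n - 1)"
  let ?V = "l1_space 2" and ?K = "l1_cone 2" and ?xs = "[(1, e0_minus_e1)]"
  have m: "2 \<le> (2::enat)" by simp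
  have "C * pi_s_norm ?V (plus_norm l1_norm ?K) n ?xs < 2 ^ (n - 1) * 2 ^ n"
    using C by (simp add: pi_s_norm_plus_norm_l1 pi_s_norm_e0_minus_e1[OF m])
  also have "\<dots> \<le> pi_s_plus_norm ?V l1_norm ?K n ?xs"
    by (rule pi_s_plus_norm_e0_minus_e1_ge[OF m n])
  finally have "\<not> pi_s_plus_norm ?V l1_norm ?K n ?xs \<le> C * pi_s_norm ?V (plus_norm l1_norm ?K) n ?xs"
    by simp
  moreover have "?xs \<in> sym_tensors ?V"
    using e0_minus_e1_in_l1_space[OF m] by (simp add: sym_tensors_def)
  ultimately show "\<exists>(V::(nat \<Rightarrow> real) set) N K. ordered_normed_space V N K \<and>
      (\<exists>xs \<in> sym_tensors V. \<not> pi_s_plus_norm V N K n xs \<le> C * pi_s_norm V (plus_norm N K) n xs)"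
    using ordered_normed_l1[of 2] unfolding ordered_normed_def by blast
next
  fix m :: enat and n :: nat
  assume "2 \<le> m \<and> 1 \<le> n"
  then show "c_pis_splus n (l1_space m) l1_norm (l1_cone m) = ereal (2 ^ (n - 1))"
    by (simp add: c_pis_splus_l1)
qed

end
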